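(* Let $J(\boldsymbol{x}) = \min_{i \in \{1,\dots,m\}} J_i(\boldsymbol{x})$ for every $\boldsymbol{x}\in\mathbb{R}^n$, where each $J_i\colon\mathbb{R}^n\to\mathbb{R}\cup\{+\infty\}$ is convex, proper and lower semicontinuous, and let $H_1,\dots,H_N\colon\mathbb{R}^n\to\mathbb{R}$ be convex and 1-coercive with at least one $H_j$ strictly convex; $H_j^*$ denotes the Legendre transform of $H_j$. For $\boldsymbol{x}\in\mathbb{R}^n$ and $t_1,\dots,t_N>0$ define $$S_i(\boldsymbol{x},t_1,\dots,t_N) = \min_{\boldsymbol{u}_1,\dots,\boldsymbol{u}_N\in\mathbb{R}^n}\left\{ J_i\left(\boldsymbol{x}-\sum_{j=1}^N\boldsymbol{u}_j\right) + \sum_{j=1}^N t_j H_j^*\left(\frac{\boldsymbol{u}_j}{t_j}\right)\right\},$$ and let $S(\boldsymbol{x},t_1,\dots,t_N)$ be the same expression with $J$ in place of $J_i$. Then $S(\boldsymbol{x},t_1,\dots,t_N)=\min_{i\in\{1,\dots,m\}}S_i(\boldsymbol{x},t_1,\dots,t_N)$, and the set $M\subset\mathbb{R}^{n\times N}$ of minimizers of the problem defining $S(\boldsymbol{x},t_1,\dots,t_N)$ satisfies $$M = \bigcup_{i\in I(\boldsymbol{x},t_1,\dots, t_N)}\operatorname{arg\,min}_{\boldsymbol{u}_1,\dots, \boldsymbol{u}_N\in\mathbb{R}^n} \left\{ J_i\left(\boldsymbol{x} - \sum_{j=1}^N\boldsymbol{u}_j\right) + \sum_{j=1}^N t_j H_j^*\left(\frac{\boldsymbol{u}_j}{t_j}\right)\right\},$$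 where $I(\boldsymbol{x},t_1,\dots, t_N) = \operatorname{arg\,min}_{i \in \{1,\dots,m\}} S_i(\boldsymbol{x},t_1,\dots, t_N)$.
   Context: Min-plus algebra technique for the multi-time Hamilton--Jacobi PDE system $\partial_{t_j} S + H_j(\nabla_{\boldsymbol{x}} S)=0$ ($j=1,\dots,N$), $S(\boldsymbol{x},0,\dots,0)=J(\boldsymbol{x})$, whose solution is given by the generalized Lax--Oleinik formula above; this corresponds to image decomposition models $\min \{J(\boldsymbol{x}-\sum_i\boldsymbol{u}_i)+\sum_i\lambda_i f_i(\boldsymbol{u}_i)\}$ with $\lambda_i f_i = t_iH_i^*(\cdot/t_i)$. $S_i$ is the solution with initial data $J_i$. *)

theory Defs
  imports "HOL-Analysis.Analysis"
begin

definition ext_convex :: "('a::real_vector \<Rightarrow> ereal) \<Rightarrow> bool" where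
  "ext_convex f \<longleftrightarrow> (\<forall>x y. \<forall>l::real. 0 < l \<and> l < 1 \<longrightarrow>
      f (l *\<^sub>R x + (1 - l) *\<^sub>R y) \<le> ereal l * f x + ereal (1 - l) * f y)"

definition ext_proper :: "('a \<Rightarrow> ereal) \<Rightarrow> bool" where
  "ext_proper f \<longleftrightarrow> (\<forall>x. f x \<noteq> -\<infinity>) \<and> (\<exists>x. f x \<noteq> \<infinity>)"

definition ext_lsc :: "('a::topological_space \<Rightarrow> ereal) \<Rightarrow> bool" where
  "ext_lsc f \<longleftrightarrow> (\<forall>x. \<forall>c < f x. eventually (\<lambda>z. c < f z) (nhds x))"

definition strictly_convex :: "('a::real_vector \<Rightarrow> real) \<Rightarrow> bool" where
  "strictly_convex f \<longleftrightarrow> (\<forall>x y. x \<noteq> y \<longrightarrow> (\<forall>l::real. 0 < l \<and> l < 1 \<longrightarrow>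
      f (l *\<^sub>R x + (1 - l) *\<^sub>R y) < l * f x + (1 - l) * f y))"

definition one_coercive :: "('a::real_normed_vector \<Rightarrow> real) \<Rightarrow> bool" where
  "one_coercive f \<longleftrightarrow> filterlim (\<lambda>x. f x / norm x) at_top at_infinity"

text \<open>Legendre transform (finite-valued for convex 1-coercive H).\<close>
definition legendre :: "('a::real_inner \<Rightarrow> real) \<Rightarrow> 'a \<Rightarrow> real" where
  "legendre H p = (SUP x. p \<bullet> x - H x)"

text \<open>Objective of the generalized Lax--Oleinik formula, with indices j ranging over
  the finite type 'k (so u :: 'k \<Rightarrow> 'a is an element of R^{n\<times>N}).\<close>
definition LO_obj :: "('a::real_inner \<Rightarrow> ereal) \<Rightarrow> ('k::finite \<Rightarrow> 'a \<Rightarrow> real)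
    \<Rightarrow> 'a \<Rightarrow> ('k \<Rightarrow> real) \<Rightarrow> ('k \<Rightarrow> 'a) \<Rightarrow> ereal" where
  "LO_obj J H x t u = J (x - (\<Sum>j\<in>UNIV. u j))
      + ereal (\<Sum>j\<in>UNIV. t j * legendre (H j) ((1 / t j) *\<^sub>R u j))"

definition LO_val :: "('a::real_inner \<Rightarrow> ereal) \<Rightarrow> ('k::finite \<Rightarrow> 'a \<Rightarrow> real)
    \<Rightarrow> 'a \<Rightarrow> ('k \<Rightarrow> real) \<Rightarrow> ereal" where
  "LO_val J H x t = (INF u. LO_obj J H x t u)"

definition LO_argmin :: "('a::real_inner \<Rightarrow> ereal) \<Rightarrow> ('k::finite \<Rightarrow> 'a \<Rightarrow> real)
    \<Rightarrow> 'a \<Rightarrow> ('k \<Rightarrow> real) \<Rightarrow> ('k \<Rightarrow> 'a) set" where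
  "LO_argmin J H x t = {u. \<forall>v. LO_obj J H x t u \<le> LO_obj J H x t v}"

end

theory Submission
  imports Defs
begin

text \<open>Min-plus linearity: the objective for \<open>J = min\<^sub>i J\<^sub>i\<close> is the pointwise minimum of the
  objectives for the \<open>J\<^sub>i\<close>, and infima and minimizers of a pointwise minimum of finitely many
  functions are read off from those of the individual functions.\<close>

lemma INF_Min_range_commute:
  fixes f :: "'i::finite \<Rightarrow> 'a \<Rightarrow> 'c::complete_linorder"
  shows "(INF u. Min (range (\<lambda>i. f i u))) = Min (range (\<lambda>i. INF u. f i u))"
proof -
  have Min_eq_INF: "Min (range g) = (INF i. g i)" for g :: "'i \<Rightarrow> 'c"
    by (simp add: cInf_eq_Min)
  show ?thesis
    unfolding Min_eq_INF by (rule INF_commute)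
qed

lemma argmin_Min_range:
  fixes f :: "'i::finite \<Rightarrow> 'a \<Rightarrow> 'c::complete_linorder"
  shows "{u. \<forall>v. Min (range (\<lambda>i. f i u)) \<le> Min (range (\<lambda>i. f i v))}
    = (\<Union>i\<in>{i. \<forall>k. (INF u. f i u) \<le> (INF u. f k u)}. {u. \<forall>v. f i u \<le> f i v})"
    (is "?M = (\<Union>i\<in>?I. ?A i)")
proof (intro set_eqI iffI)
  fix u assume "u \<in> ?M"
  then have u_min: "Min (range (\<lambda>i. f i u)) \<le> Min (range (\<lambda>i. INF v. f i v))"
    by (simp flip: INF_Min_range_commute add: le_INF_iff)
  have "Min (range (\<lambda>i. f i u)) \<in> range (\<lambda>i. f i u)"
    by (rule Min_in) auto
  then obtain i where i: "Min (range (\<lambda>i. f i u)) = f i u"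
    by blast
  have below_all: "f i u \<le> (INF v. f k v)" for k
  proof -
    have "Min (range (\<lambda>i. INF v. f i v)) \<le> (INF v. f k v)"
      by (rule Min_le) auto
    then show ?thesis
      using u_min i by simp
  qed
  have "(INF v. f i v) \<le> f i u"
    by (rule INF_lower) simp
  then have "i \<in> ?I"
    using order_trans[OF _ below_all] by blast
  moreover have "u \<in> ?A i"
    using below_all[of i] by (simp add: le_INF_iff)
  ultimately show "u \<in> (\<Union>i\<in>?I. ?A i)" by blast
next
  fix u assume "u \<in> (\<Union>i\<in>?I. ?A i)"
  then obtain i where i: "i \<in> ?I" and u_min: "u \<in> ?A i" by blast
  have "Min (range (\<lambda>i. f i u)) \<le> f i u"
    by (rule Min_le) auto
  also have "\<dots> \<le> (INF v. f i v)"
    using u_min by (simp add: le_INF_iff)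
  also have "\<dots> = Min (range (\<lambda>i. INF v. f i v))"
  proof (rule antisym)
    show "(INF v. f i v) \<le> Min (range (\<lambda>i. INF v. f i v))"
      using i by simp
    show "Min (range (\<lambda>i. INF v. f i v)) \<le> (INF v. f i v)"
      by (rule Min_le) auto
  qed
  also have "\<dots> = (INF v. Min (range (\<lambda>i. f i v)))"
    by (rule INF_Min_range_commute[symmetric])
  finally show "u \<in> ?M"
    by (simp add: le_INF_iff del: Min_le_iff)
qed

lemma LO_obj_Min_range:
  fixes Js :: "'m::finite \<Rightarrow> 'a::real_inner \<Rightarrow> ereal"
  assumes "\<And>y. J y = Min (range (\<lambda>i. Js i y))"
  shows "LO_obj J H x t u = Min (range (\<lambda>i. LO_obj (Js i) H x t u))"
proof -
  define c where "c = ereal (\<Sum>j\<in>UNIV. t j * legendre (H j) ((1 / t j) *\<^sub>R u j))"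
  have "mono (\<lambda>z::ereal. z + c)"
    by (auto simp: mono_def add_right_mono)
  then have "Min (range (\<lambda>i. Js i (x - sum u UNIV))) + c
      = Min ((\<lambda>z. z + c) ` range (\<lambda>i. Js i (x - sum u UNIV)))"
    by (rule mono_Min_commute) auto
  then show ?thesis
    unfolding LO_obj_def c_def assms by (simp add: image_image)
qed

theorem mainTheorem2:
  fixes Js :: "'m::finite \<Rightarrow> 'a::euclidean_space \<Rightarrow> ereal"
    and J :: "'a \<Rightarrow> ereal"
    and H :: "'k::finite \<Rightarrow> 'a \<Rightarrow> real"
    and x :: 'a and t :: "'k \<Rightarrow> real"
  assumes J_def: "\<And>y. J y = Min (range (\<lambda>i. Js i y))"
    and Js_convex: "\<And>i. ext_convex (Js i)"
    and Js_proper: "\<And>i. ext_proper (Js i)"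
    and Js_lsc: "\<And>i. ext_lsc (Js i)"
    and H_convex: "\<And>j. convex_on UNIV (H j)"
    and H_coercive: "\<And>j. one_coercive (H j)"
    and H_strict: "\<exists>j. strictly_convex (H j)"
    and t_pos: "\<And>j. t j > 0"
  shows "LO_val J H x t = Min (range (\<lambda>i. LO_val (Js i) H x t))
    \<and> LO_argmin J H x t =
        (\<Union>i\<in>{i. \<forall>k. LO_val (Js i) H x t \<le> LO_val (Js k) H x t}. LO_argmin (Js i) H x t)"
proof -
  have obj: "LO_obj J H x t = (\<lambda>u. Min (range (\<lambda>i. LO_obj (Js i) H x t u)))"
    by (intro ext LO_obj_Min_range J_def)
  show ?thesis
    unfolding LO_val_def LO_argmin_def obj argmin_Min_range INF_Min_range_commute
    by (rule conjI refl)+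
qed

end
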